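(* Let $1\le k\le n-1$, let $w\in W^J$, and let $w=s_j\cdots s_h$ be a reduced decomposition of $w$. Then the parabolic Kazhdan–Lusztig element $C'^J_w\in M'$ equals $(T_j-v)\cdots(T_h-v)\,\mathbf 1$.
   Context: Let $\mathcal H$ be the Hecke algebra of $S_n$ over $\mathbb Q(v)$, generated by $T_1,\dots,T_{n-1}$ with braid relations and $(T_i-v)(T_i+v^{-1})=0$; bar involution: ring involution with $\overline v=v^{-1}$, $\overline{T_w}=T_{w^{-1}}^{-1}$. Let $E$ be the set of sequences of $n$ signs $\pm$ with exactly $k$ pluses, with $S_n$ permuting positions ($s_i$ swaps entries $i,i+1$); $\mathbf 1=(+^k,-^{n-k})$. Let $M'=\bigoplus_{\varepsilon\in E}\mathbb Q(v)\varepsilon$ with $\mathcal H$-action: $T_i\varepsilon=s_i\varepsilon$ if $(\varepsilon_i,\varepsilon_{i+1})=(+,-)$; $T_i\varepsilon=v\varepsilon$ if $(\varepsilon_i,\varepsilon_{i+1})\in\{(+,+),(-,-)\}$; $T_i\varepsilon=s_i\varepsilon+(v-v^{-1})\varepsilon$ if $(\varepsilon_i,\varepsilon_{i+1})=(-,+)$. $M'$ carries the bar involution $\overline{h\mathbf 1}=\overline h\,\mathbf 1$. $W^J$ is the set of minimal length representatives of $S_n/(S_k\times S_{n-k})$, and $y\mapsto y(\mathbf 1)$ is a bijection $W^J\to E$. The parabolic Kazhdan–Lusztig element $C'^J_y\in M'$ ($y\in W^J$) is the unique element with $\overline{C'^J_y}=C'^J_y$ and $C'^J_y-y(\mathbf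 1)\in\sum_\varepsilon v\mathbb Z[v]\varepsilon$. *)

theory Defs
  imports "HOL-Computational_Algebra.Computational_Algebra" "HOL-Combinatorics.Transposition"
          "HOL-Combinatorics.Permutations"
begin

text \<open>The field Q(v) of rational functions, the indeterminate v and the
  field involution v to v^-1 (fixing Q).\<close>

type_synonym Qv = "rat poly fract"

definition vv :: Qv where "vv = to_fract [:0, 1:]"

definition barpoly :: "rat poly \<Rightarrow> Qv" where
  "barpoly p = poly (map_poly (\<lambda>c. to_fract [:c:]) p) (inverse vv)"

definition barQ :: "Qv \<Rightarrow> Qv" where
  "barQ x = (let (a, b) = (SOME (a, b). b \<noteq> 0 \<and> x = to_fract a / to_fract b)
             in barpoly a / barpoly b)"

definition vZv :: "Qv set" where
  "vZv = {to_fract (map_poly of_int p) | p :: int poly. coeff p 0 = 0}"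

definition sg :: "nat \<Rightarrow> nat \<Rightarrow> nat" where "sg i = transpose i (Suc i)"

definition wordprod :: "nat list \<Rightarrow> nat \<Rightarrow> nat" where
  "wordprod ws = foldr (\<lambda>i acc. sg i \<circ> acc) ws id"

definition is_word :: "nat \<Rightarrow> nat list \<Rightarrow> bool" where
  "is_word n ws \<longleftrightarrow> set ws \<subseteq> {1..<n}"

definition len :: "nat \<Rightarrow> (nat \<Rightarrow> nat) \<Rightarrow> nat" where
  "len n w = (LEAST r. \<exists>ws. is_word n ws \<and> length ws = r \<and> wordprod ws = w)"

definition reduced_word :: "nat \<Rightarrow> (nat \<Rightarrow> nat) \<Rightarrow> nat list \<Rightarrow> bool" where
  "reduced_word n w ws \<longleftrightarrow> is_word n ws \<and> wordprod ws = w \<and> length ws = len n w"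

definition WJ :: "nat \<Rightarrow> nat \<Rightarrow> (nat \<Rightarrow> nat) set" where
  "WJ n k = {u. u permutes {1..n} \<and> u ` {1..k} = {1..k}}"

definition minWJ :: "nat \<Rightarrow> nat \<Rightarrow> (nat \<Rightarrow> nat) set" where
  "minWJ n k = {w. w permutes {1..n} \<and> (\<forall>u\<in>WJ n k. len n w \<le> len n (w \<circ> u))}"

text \<open>Sign sequences with k pluses are encoded by the set of positions carrying +,
  i.e. k-subsets of {1..n}; S_n acts by image, so s_i swaps entries i, i+1.
  The base sequence 1 = (+^k,-^(n-k)) is {1..k}.\<close>

definition Eset :: "nat \<Rightarrow> nat \<Rightarrow> nat set set" where
  "Eset n k = {e. e \<subseteq> {1..n} \<and> card e = k}"

definition one_seq :: "nat \<Rightarrow> nat set" where "one_seq k = {1..k}"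

type_synonym modM = "nat set \<Rightarrow> Qv"

definition Mset :: "nat \<Rightarrow> nat \<Rightarrow> modM set" where
  "Mset n k = {m. \<forall>e. e \<notin> Eset n k \<longrightarrow> m e = 0}"

definition basis :: "nat set \<Rightarrow> modM" where
  "basis e = (\<lambda>e'. if e' = e then 1 else 0)"

definition restrM :: "nat \<Rightarrow> nat \<Rightarrow> modM \<Rightarrow> modM" where
  "restrM n k m = (\<lambda>e. if e \<in> Eset n k then m e else 0)"

text \<open>Action of T_i on M' (linear extension of the given action on basis vectors):
  T_i e = s_i e for (+,-); v e for (+,+),(-,-); s_i e + (v - v^-1) e for (-,+).\<close>
definition Tact :: "nat \<Rightarrow> modM \<Rightarrow> modM" where
  "Tact i m = (\<lambda>e.
     if (i \<in> e) = (Suc i \<in> e) then vv * m e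
     else if i \<notin> e \<and> Suc i \<in> e then m (sg i ` e) + (vv - inverse vv) * m e
     else m (sg i ` e))"

text \<open>The bar involution on M': the unique Z-additive, bar-semilinear map with
  bar(1) = 1 and bar(T_i m) = T_i^-1 bar(m) (equivalent to bar(h 1) = bar(h) 1,
  since H is generated by the T_i, their inverses and scalars).  It is taken to
  factor through the restriction to E so that it is uniquely determined.\<close>
definition is_barM :: "nat \<Rightarrow> nat \<Rightarrow> (modM \<Rightarrow> modM) \<Rightarrow> bool" where
  "is_barM n k b \<longleftrightarrow>
     (\<forall>m. b m = b (restrM n k m)) \<and>
     (\<forall>m \<in> Mset n k. b m \<in> Mset n k) \<and>
     (\<forall>m1 \<in> Mset n k. \<forall>m2 \<in> Mset n k. b (\<lambda>e. m1 e + m2 e) = (\<lambda>e. b m1 e + b m2 e)) \<and>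
     (\<forall>c. \<forall>m \<in> Mset n k. b (\<lambda>e. c * m e) = (\<lambda>e. barQ c * b m e)) \<and>
     b (basis (one_seq k)) = basis (one_seq k) \<and>
     (\<forall>i \<in> {1..<n}. \<forall>m \<in> Mset n k. Tact i (b (Tact i m)) = b m)"

definition barM :: "nat \<Rightarrow> nat \<Rightarrow> modM \<Rightarrow> modM" where
  "barM n k = (THE b. is_barM n k b)"

definition parKL :: "nat \<Rightarrow> nat \<Rightarrow> (nat \<Rightarrow> nat) \<Rightarrow> modM" where
  "parKL n k y = (THE m. m \<in> Mset n k \<and> barM n k m = m \<and>
      (\<forall>e \<in> Eset n k. m e - basis (y ` one_seq k) e \<in> vZv))"

definition Tminus_word :: "nat list \<Rightarrow> modM \<Rightarrow> modM" where
  "Tminus_word ws m = foldr (\<lambda>i x. (\<lambda>e. Tact i x e - vv * x e)) ws m"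

end

theory Submission
  imports Defs
begin

text \<open>
  For a sign sequence e, let D(e) = (T_i - v) D(s_i e) when i is a descent of e (a pattern
  (-,+) at positions i, i+1), and D(1) = 1.  The operators T_i - v on M' commute when far
  apart, square to -(v + v^-1)(T_i - v), and satisfy a degenerate braid relation, so D(e)
  does not depend on the descents chosen.  Induction on the position sum of e shows that
  D(e) - e is a combination of sequences with smaller position sum and coefficients in v Z[v];
  hence the D(e) form a basis of M'.  Each (T_i - v) D(e) is a combination of the D(g) with
  bar-invariant coefficients, so conjugating coordinates in this basis is the bar involution
  of M'.  Thus D(e) is bar invariant and congruent to e modulo v Z[v], i.e. D(w 1) = C'_w.
  Finally, along a reduced word of a minimal coset representative every letter raises the
  position sum by one, so every letter acts at an ascent and (T_j - v) ... (T_h - v) 1 is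
  built exactly as D(w 1).
\<close>

section \<open>The bar involution of Q(v)\<close>

definition const_fract :: "rat \<Rightarrow> Qv" where
  "const_fract c = to_fract [:c:]"

lemma const_fract_simps [simp]:
  "const_fract 0 = 0" "const_fract 1 = 1"
  "const_fract (a + b) = const_fract a + const_fract b"
  "const_fract (a * b) = const_fract a * const_fract b"
  "const_fract a = 0 \<longleftrightarrow> a = 0"
  by (simp_all add: const_fract_def one_pCons[symmetric] flip: to_fract_add to_fract_mult)

definition eval_fract :: "Qv \<Rightarrow> rat poly \<Rightarrow> Qv" where
  "eval_fract t p = poly (map_poly const_fract p) t"

lemma eval_fract_pCons: "eval_fract t (pCons a p) = const_fract a + t * eval_fract t p"
  by (simp add: eval_fract_def map_poly_pCons)

lemma eval_fract_simps [simp]: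
  "eval_fract t 0 = 0" "eval_fract t 1 = 1"
  "eval_fract t (p + q) = eval_fract t p + eval_fract t q"
proof -
  have "map_poly const_fract (p + q) = map_poly const_fract p + map_poly const_fract q"
    by (rule poly_eqI) (simp add: coeff_map_poly)
  then show "eval_fract t (p + q) = eval_fract t p + eval_fract t q"
    by (simp add: eval_fract_def)
qed (simp_all add: eval_fract_def one_pCons map_poly_pCons)

lemma eval_fract_mult [simp]: "eval_fract t (p * q) = eval_fract t p * eval_fract t q"
proof (induction p rule: pCons_induct)
  case (pCons a p)
  have "pCons a p * q = smult a q + pCons 0 (p * q)"
    by (simp add: mult_pCons_left)
  moreover have "eval_fract t (smult a q) = const_fract a * eval_fract t q"
    by (simp add: eval_fract_def map_poly_smult)
  ultimately show ?case
    using pCons.IH by (simp add: eval_fract_pCons algebra_simps)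
qed simp

lemma eval_fract_vv: "eval_fract vv p = to_fract p"
proof (induction p rule: pCons_induct)
  case (pCons a p)
  have "to_fract (pCons a p) = to_fract [:a:] + vv * to_fract p"
    by (simp add: vv_def flip: to_fract_add to_fract_mult)
  then show ?case
    using pCons.IH by (simp add: eval_fract_pCons const_fract_def)
qed simp

lemma vv_nonzero [simp]: "vv \<noteq> 0"
  by (simp add: vv_def)

lemma barpoly_eq_eval_fract: "barpoly p = eval_fract (inverse vv) p"
  by (simp add: barpoly_def eval_fract_def const_fract_def[abs_def])

lemma to_fract_reflect_poly: "to_fract (reflect_poly p) = vv ^ degree p * barpoly p"
proof -
  have "reflect_poly (map_poly const_fract p) = map_poly const_fract (reflect_poly p)"
    by (rule poly_eqI) (simp add: coeff_reflect_poly coeff_map_poly degree_map_poly)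
  then have "to_fract (reflect_poly p) = poly (reflect_poly (map_poly const_fract p)) vv"
    using eval_fract_vv[of "reflect_poly p"] by (simp add: eval_fract_def)
  then show ?thesis
    by (simp add: poly_reflect_poly_nz degree_map_poly barpoly_eq_eval_fract eval_fract_def)
qed

lemma barpoly_nonzero: "p \<noteq> 0 \<Longrightarrow> barpoly p \<noteq> 0"
  using to_fract_reflect_poly[of p] by auto

lemma barpoly_hom [simp]:
  "barpoly (p + q) = barpoly p + barpoly q" "barpoly (p * q) = barpoly p * barpoly q"
  by (simp_all add: barpoly_eq_eval_fract)

lemma barQ_fraction:
  assumes "b \<noteq> 0"
  shows "barQ (to_fract a / to_fract b) = barpoly a / barpoly b"
proof -
  let ?P = "\<lambda>(a', b'). b' \<noteq> 0 \<and> to_fract a / to_fract b = to_fract a' / to_fract b'"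
  obtain a' b' where chosen: "(SOME ab. ?P ab) = (a', b')"
    by (cases "SOME ab. ?P ab") auto
  have "\<exists>ab. ?P ab"
    using assms by auto
  from someI_ex[OF this] chosen have b': "b' \<noteq> 0"
    and eq: "to_fract a / to_fract b = to_fract a' / to_fract b'"
    by auto
  from eq assms b' have "a * b' = a' * b"
    by (simp add: field_simps flip: to_fract_mult)
  then have "barpoly a * barpoly b' = barpoly a' * barpoly b"
    by (metis barpoly_hom(2))
  then show ?thesis
    using chosen barpoly_nonzero[OF assms] barpoly_nonzero[OF b']
    by (simp add: barQ_def field_simps)
qed

lemma fract_as_quotient: obtains a b where "b \<noteq> 0" "x = to_fract a / to_fract b"
  by (cases x) (auto simp: Fract_conv_to_fract)

lemma barQ_to_fract: "barQ (to_fract a) = barpoly a"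
  using barQ_fraction[of 1 a] by (simp add: barpoly_eq_eval_fract)

lemma barQ_add [simp]: "barQ (x + y) = barQ x + barQ y"
proof -
  obtain a b c d where b: "b \<noteq> 0" "x = to_fract a / to_fract b"
    and d: "d \<noteq> 0" "y = to_fract c / to_fract d"
    by (metis fract_as_quotient)
  then have sum: "x + y = to_fract (a * d + c * b) / to_fract (b * d)"
    by (simp add: field_simps)
  have "barQ (x + y) = barpoly (a * d + c * b) / barpoly (b * d)"
    unfolding sum by (rule barQ_fraction) (use b d in simp)
  also have "\<dots> = barpoly a / barpoly b + barpoly c / barpoly d"
    using barpoly_nonzero[OF b(1)] barpoly_nonzero[OF d(1)] by (simp add: field_simps)
  finally show ?thesis
    using b d by (simp add: barQ_fraction)
qed

lemma barQ_mult [simp]: "barQ (x * y) = barQ x * barQ y"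
proof -
  obtain a b c d where b: "b \<noteq> 0" "x = to_fract a / to_fract b"
    and d: "d \<noteq> 0" "y = to_fract c / to_fract d"
    by (metis fract_as_quotient)
  then have prod: "x * y = to_fract (a * c) / to_fract (b * d)"
    by (simp add: field_simps)
  have "barQ (x * y) = barpoly (a * c) / barpoly (b * d)"
    unfolding prod by (rule barQ_fraction) (use b d in simp)
  then show ?thesis
    using b d by (simp add: barQ_fraction)
qed

lemma barQ_0 [simp]: "barQ 0 = 0"
  using barQ_to_fract[of 0] by (simp add: barpoly_eq_eval_fract)

lemma barQ_1 [simp]: "barQ 1 = 1"
  using barQ_to_fract[of 1] by (simp add: barpoly_eq_eval_fract)

lemma barQ_uminus [simp]: "barQ (- x) = - barQ x"
  using barQ_add[of x "- x"] by (simp add: eq_neg_iff_add_eq_0)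

lemma barQ_diff [simp]: "barQ (x - y) = barQ x - barQ y"
  using barQ_add[of x "- y"] by simp

lemma barQ_vv [simp]: "barQ vv = inverse vv"
  using barQ_to_fract[of "[:0, 1:]"] by (simp add: vv_def barpoly_eq_eval_fract eval_fract_pCons)

lemma barQ_inverse_vv [simp]: "barQ (inverse vv) = vv"
proof -
  have "barQ (inverse vv) * inverse vv = 1"
    using barQ_mult[of "inverse vv" vv] by simp
  then show ?thesis
    by (simp add: field_simps)
qed

lemma barQ_sum: "barQ (sum f A) = (\<Sum>x\<in>A. barQ (f x))"
  by (induction A rule: infinite_finite_induct) auto

definition int_fract :: "int poly \<Rightarrow> Qv" where
  "int_fract p = to_fract (map_poly of_int p)"

lemma int_fract_simps [simp]:
  "int_fract 0 = 0" "int_fract 1 = 1"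
  "int_fract (p - q) = int_fract p - int_fract q"
proof -
  have "map_poly (of_int :: int \<Rightarrow> rat) (p - q) = map_poly of_int p - map_poly of_int q"
    by (rule poly_eqI) (simp add: coeff_map_poly)
  then show "int_fract (p - q) = int_fract p - int_fract q"
    by (simp add: int_fract_def)
qed (simp_all add: int_fract_def)

lemma vv_mult_int_fract: "vv * int_fract p = int_fract (pCons 0 p)"
  by (simp add: int_fract_def vv_def map_poly_pCons flip: to_fract_mult)

lemma vZv_int_fract: "vZv = {int_fract p | p. coeff p 0 = 0}"
  by (simp add: vZv_def int_fract_def)

lemma vZv_zero: "0 \<in> vZv"
  unfolding vZv_int_fract by (metis (mono_tags) coeff_0 int_fract_simps(1) mem_Collect_eq)

lemma vZv_diff: "x \<in> vZv \<Longrightarrow> y \<in> vZv \<Longrightarrow> x - y \<in> vZv"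
  unfolding vZv_int_fract by (smt (verit) coeff_diff diff_0_right int_fract_simps(3) mem_Collect_eq)

definition vpow_Zv :: "nat \<Rightarrow> Qv set" where
  "vpow_Zv d = {vv ^ d * int_fract p | p. True}"

lemma vpow_Zv_zero [simp]: "0 \<in> vpow_Zv d"
  unfolding vpow_Zv_def by (metis (mono_tags) int_fract_simps(1) mem_Collect_eq mult_zero_right)

lemma one_mem_vpow_Zv_0: "1 \<in> vpow_Zv 0"
  unfolding vpow_Zv_def by (metis (mono_tags) int_fract_simps(2) mem_Collect_eq mult_1 power_0)

lemma vpow_Zv_diff: "x \<in> vpow_Zv d \<Longrightarrow> y \<in> vpow_Zv d \<Longrightarrow> x - y \<in> vpow_Zv d"
  unfolding vpow_Zv_def by (smt (verit) int_fract_simps(3) mem_Collect_eq right_diff_distrib)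

lemma vv_mult_vpow_Zv: "x \<in> vpow_Zv d \<Longrightarrow> vv * x \<in> vpow_Zv (Suc d)"
  unfolding vpow_Zv_def by (auto simp: mult.assoc)

lemma inverse_vv_mult_vpow_Zv:
  assumes "x \<in> vpow_Zv (Suc d)"
  shows "inverse vv * x \<in> vpow_Zv d"
proof -
  obtain p where "x = vv ^ Suc d * int_fract p"
    using assms unfolding vpow_Zv_def by blast
  then have "inverse vv * x = vv ^ d * int_fract p"
    by simp
  then show ?thesis
    unfolding vpow_Zv_def by blast
qed

lemma vpow_Zv_Suc_subset: "vpow_Zv (Suc d) \<subseteq> vpow_Zv d"
  unfolding vpow_Zv_def by (auto simp: vv_mult_int_fract mult.left_commute)

lemma vpow_Zv_antimono: "d \<le> d' \<Longrightarrow> vpow_Zv d' \<subseteq> vpow_Zv d"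
  by (induction d' rule: dec_induct) (use vpow_Zv_Suc_subset in blast)+

lemma vpow_Zv_1_subset_vZv: "vpow_Zv 1 \<subseteq> vZv"
  unfolding vpow_Zv_def vZv_int_fract by (auto simp: vv_mult_int_fract)

text \<open>Writing x = q(v) with q(0) = 0, invariance gives reflect q = v^(deg q) q, which is
  impossible for degree reasons unless q = 0.\<close>

lemma vZv_barQ_fixed_eq_0:
  assumes "x \<in> vZv" "barQ x = x"
  shows "x = 0"
proof (rule ccontr)
  assume "x \<noteq> 0"
  obtain p :: "int poly" where p: "x = to_fract (map_poly of_int p)" "coeff p 0 = 0"
    using assms(1) unfolding vZv_def by blast
  define q :: "rat poly" where "q = map_poly of_int p"
  have q0: "coeff q 0 = 0" and "q \<noteq> 0"
    using p \<open>x \<noteq> 0\<close> by (auto simp: q_def coeff_map_poly)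
  have "to_fract (reflect_poly q) = vv ^ degree q * to_fract q"
    using to_fract_reflect_poly[of q] assms p by (simp add: q_def barQ_to_fract)
  also have "vv ^ d = to_fract (monom 1 d)" for d
    by (induction d) (simp_all add: vv_def monom_altdef one_pCons[symmetric] flip: to_fract_mult)
  finally have "reflect_poly q = monom 1 (degree q) * q"
    by (simp flip: to_fract_mult)
  then have "degree q + degree q \<le> degree q"
    using degree_reflect_poly_le[of q] \<open>q \<noteq> 0\<close> by (simp add: degree_mult_eq degree_monom_eq)
  then have "q = [:coeff q 0:]"
    by (simp add: degree_0_id)
  then show False
    using q0 \<open>q \<noteq> 0\<close> by simp
qed

section \<open>Adjacent transpositions acting on sign sequences\<close>

lemma sg_apply: "sg i x = (if x = i then Suc i else if x = Suc i then i else x)"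
  by (simp add: sg_def transpose_def)

lemma sg_sg [simp]: "sg i (sg i x) = x"
  by (simp add: sg_apply)

lemma sg_simps [simp]: "sg i i = Suc i" "sg i (Suc i) = i"
  by (simp_all add: sg_apply)

lemma inj_sg: "inj (sg i)"
  by (metis injI sg_sg)

lemma mem_image_sg [simp]: "x \<in> sg i ` A \<longleftrightarrow> sg i x \<in> A"
  by (metis image_iff sg_sg)

lemma image_sg_image_sg [simp]: "sg i ` sg i ` A = A"
  by auto

lemma image_sg_eq_self: "(i \<in> A \<longleftrightarrow> Suc i \<in> A) \<Longrightarrow> sg i ` A = A"
  by (auto simp: sg_apply)

lemma image_sg_commute: "Suc i < j \<or> Suc j < i \<Longrightarrow> sg i ` sg j ` A = sg j ` sg i ` A"
  by (auto simp: sg_apply)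

lemma sum_image_sg_up:
  assumes "finite A" "i \<in> A" "Suc i \<notin> A"
  shows "\<Sum>(sg i ` A) = \<Sum>A + 1"
proof -
  have "\<Sum>(sg i ` A) = (\<Sum>x\<in>A. sg i x)"
    by (simp add: sum.reindex inj_on_subset[OF inj_sg])
  also have "\<dots> = sg i i + (\<Sum>x\<in>A - {i}. sg i x)"
    using assms by (simp add: sum.remove)
  also have "(\<Sum>x\<in>A - {i}. sg i x) = (\<Sum>x\<in>A - {i}. x)"
    by (rule sum.cong) (use assms in \<open>auto simp: sg_apply\<close>)
  also have "sg i i + (\<Sum>x\<in>A - {i}. x) = \<Sum>A + 1"
    using assms by (simp add: sum.remove sg_apply)
  finally show ?thesis .
qed

lemma sum_image_sg_down:
  assumes "finite A" "i \<notin> A" "Suc i \<in> A"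
  shows "\<Sum>(sg i ` A) + 1 = \<Sum>A"
proof -
  have "i \<in> sg i ` A" "Suc i \<notin> sg i ` A"
    using assms(2,3) by (simp_all add: sg_apply)
  from sum_image_sg_up[OF _ this] assms(1) show ?thesis
    by simp
qed

lemma sum_image_sg_le:
  assumes "finite A"
  shows "\<Sum>(sg i ` A) \<le> \<Sum>A + 1"
proof -
  consider "i \<in> A" "Suc i \<notin> A" | "i \<notin> A" "Suc i \<in> A" | "i \<in> A \<longleftrightarrow> Suc i \<in> A"
    by blast
  then show ?thesis
    by cases (use sum_image_sg_up[OF assms] sum_image_sg_down[OF assms] image_sg_eq_self in force)+
qed

lemma finite_Eset [simp]: "finite (Eset n k)"
  by (rule finite_subset[of _ "Pow {1..n}"]) (auto simp: Eset_def)

lemma finite_of_Eset: "e \<in> Eset n k \<Longrightarrow> finite e"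
  by (auto simp: Eset_def intro: finite_subset)

lemma one_seq_Eset: "k \<le> n \<Longrightarrow> one_seq k \<in> Eset n k"
  by (simp add: one_seq_def Eset_def)

lemma image_sg_Eset:
  assumes "e \<in> Eset n k" "1 \<le> i" "i < n"
  shows "sg i ` e \<in> Eset n k"
proof -
  have "card (sg i ` e) = card e"
    by (rule card_image) (rule inj_on_subset[OF inj_sg], simp)
  moreover have "sg i ` e \<subseteq> {1..n}"
    using assms by (auto simp: Eset_def sg_apply)
  ultimately show ?thesis
    using assms(1) by (simp add: Eset_def)
qed

lemma image_sg_Eset_iff: "1 \<le> i \<Longrightarrow> i < n \<Longrightarrow> sg i ` e \<in> Eset n k \<longleftrightarrow> e \<in> Eset n k"
  by (metis image_sg_Eset image_sg_image_sg)

definition descent :: "nat \<Rightarrow> nat set \<Rightarrow> nat \<Rightarrow> bool" where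
  "descent n e i \<longleftrightarrow> 1 \<le> i \<and> i < n \<and> i \<notin> e \<and> Suc i \<in> e"

lemma sum_image_sg_descent: "finite e \<Longrightarrow> descent n e i \<Longrightarrow> \<Sum>(sg i ` e) + 1 = \<Sum>e"
  unfolding descent_def by (rule sum_image_sg_down) simp_all

lemma descent_image_sg_Eset: "e \<in> Eset n k \<Longrightarrow> descent n e i \<Longrightarrow> sg i ` e \<in> Eset n k"
  by (simp add: descent_def image_sg_Eset)

lemma descents_far_apart:
  assumes "descent n e i" "descent n e j" "i \<noteq> j"
  shows "Suc i < j \<or> Suc j < i"
  using assms unfolding descent_def by (metis Suc_lessI not_less_iff_gr_or_eq)

lemma one_seq_no_descent: "\<not> descent n (one_seq k) i"
  by (auto simp: descent_def one_seq_def)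

lemma exists_step_into:
  fixes A :: "nat set"
  assumes "y \<notin> A" "x \<in> A" "y < x"
  shows "\<exists>z. y \<le> z \<and> z < x \<and> z \<notin> A \<and> Suc z \<in> A"
  using assms
proof (induction x)
  case (Suc x)
  show ?case
  proof (cases "x \<in> A")
    case True
    then have "y \<noteq> x"
      using Suc.prems(1) by blast
    with Suc.prems(3) have "y < x"
      by simp
    then obtain z where "y \<le> z" "z < x" "z \<notin> A" "Suc z \<in> A"
      using Suc.IH[OF Suc.prems(1) True] by blast
    then show ?thesis
      by (intro exI[of _ z]) simp
  next
    case False
    then show ?thesis
      using Suc.prems by (intro exI[of _ x]) simp
  qed
qed simp

lemma Eset_has_descent:
  assumes "e \<in> Eset n k" "e \<noteq> one_seq k"
  obtains i where "descent n e i"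
proof -
  have e: "finite e" "e \<subseteq> {1..n}" "card e = k"
    using assms(1) finite_of_Eset[OF assms(1)] by (auto simp: Eset_def)
  have "\<not> e \<subseteq> {1..k}"
  proof
    assume "e \<subseteq> {1..k}"
    then have "e = {1..k}"
      using e(3) by (intro card_subset_eq) auto
    with assms(2) show False
      by (simp add: one_seq_def)
  qed
  then obtain x where x: "x \<in> e" "x \<notin> {1..k}"
    by blast
  have "\<not> {1..k} \<subseteq> e"
  proof
    assume "{1..k} \<subseteq> e"
    then have "{1..k} = e"
      using e by (intro card_subset_eq) auto
    with assms(2) show False
      by (simp add: one_seq_def)
  qed
  then obtain y where y: "y \<in> {1..k}" "y \<notin> e"
    by blast
  have "y < x"
    using x y e(2) by auto
  then obtain z where "y \<le> z" "z < x" "z \<notin> e" "Suc z \<in> e"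
    using exists_step_into[OF y(2) x(1)] by blast
  then have "descent n e z"
    using x(1) y(1) e(2) by (auto simp: descent_def)
  then show ?thesis
    by (rule that)
qed

lemma Eset_descent_induct [consumes 1, case_names one_seq descent]:
  assumes "e \<in> Eset n k"
    and "one_seq k \<in> Eset n k \<Longrightarrow> P (one_seq k)"
    and "\<And>e i. e \<in> Eset n k \<Longrightarrow> descent n e i \<Longrightarrow> sg i ` e \<in> Eset n k \<Longrightarrow>
      \<Sum>(sg i ` e) + 1 = \<Sum>e \<Longrightarrow> P (sg i ` e) \<Longrightarrow> P e"
  shows "P e"
  using assms(1)
proof (induction "\<Sum>e" arbitrary: e rule: less_induct)
  case less
  show ?case
  proof (cases "e = one_seq k")
    case False
    then obtain i where i: "descent n e i"
      using Eset_has_descent less.prems by blast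
    have "\<Sum>(sg i ` e) + 1 = \<Sum>e"
      using sum_image_sg_descent[OF finite_of_Eset[OF less.prems] i] .
    then show ?thesis
      using assms(3) less i descent_image_sg_Eset by simp
  qed (use assms(2) less.prems in simp)
qed

section \<open>The operators T_i - v\<close>

definition Tminus :: "nat \<Rightarrow> modM \<Rightarrow> modM" where
  "Tminus i x = (\<lambda>f. Tact i x f - vv * x f)"

lemma Tminus_apply:
  "Tminus i x f =
    (if (i \<in> f) = (Suc i \<in> f) then 0
     else if i \<notin> f \<and> Suc i \<in> f then x (sg i ` f) - inverse vv * x f
     else x (sg i ` f) - vv * x f)"
  by (simp add: Tminus_def Tact_def algebra_simps)

lemma Tminus_word_Cons: "Tminus_word (i # ws) m = Tminus i (Tminus_word ws m)"
  by (simp add: Tminus_word_def Tminus_def)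

lemma Tminus_commute:
  assumes "Suc i < j \<or> Suc j < i"
  shows "Tminus i (Tminus j x) = Tminus j (Tminus i x)"
proof
  fix f
  have "sg i j = j" "sg i (Suc j) = Suc j" "sg j i = i" "sg j (Suc i) = Suc i"
    using assms by (auto simp: sg_apply)
  then show "Tminus i (Tminus j x) f = Tminus j (Tminus i x) f"
    using image_sg_commute[OF assms] by (simp add: Tminus_apply algebra_simps)
qed

lemma Tminus_square: "Tminus i (Tminus i x) = (\<lambda>f. - (vv + inverse vv) * Tminus i x f)"
  by (rule ext) (simp add: Tminus_apply field_simps)

text \<open>This degenerate braid relation is special to M': it holds because three consecutive
  entries of a sign sequence are never pairwise distinct.\<close>

lemma Tminus_braid:
  shows "Tminus i (Tminus (Suc i) (Tminus i x)) = Tminus i x"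
    and "Tminus (Suc i) (Tminus i (Tminus (Suc i) x)) = Tminus (Suc i) x"
proof -
  have sg: "sg i (Suc (Suc i)) = Suc (Suc i)" "sg (Suc i) i = i"
    by (simp_all add: sg_apply)
  show "Tminus i (Tminus (Suc i) (Tminus i x)) = Tminus i x"
  proof
    fix f
    show "Tminus i (Tminus (Suc i) (Tminus i x)) f = Tminus i x f"
      using sg by (cases "i \<in> f"; cases "Suc i \<in> f"; cases "Suc (Suc i) \<in> f";
          simp add: Tminus_apply image_sg_eq_self field_simps)
  qed
  show "Tminus (Suc i) (Tminus i (Tminus (Suc i) x)) = Tminus (Suc i) x"
  proof
    fix f
    show "Tminus (Suc i) (Tminus i (Tminus (Suc i) x)) f = Tminus (Suc i) x f"
      using sg by (cases "i \<in> f"; cases "Suc i \<in> f"; cases "Suc (Suc i) \<in> f";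
          simp add: Tminus_apply image_sg_eq_self field_simps)
  qed
qed

text \<open>The inverse of T_i is T_i - (v - v^-1) = (T_i - v) + v^-1.\<close>

definition Tinv :: "nat \<Rightarrow> modM \<Rightarrow> modM" where
  "Tinv i y = (\<lambda>f. Tminus i y f + inverse vv * y f)"

lemma Tact_Tinv: "Tact i (Tinv i y) = y"
  by (rule ext) (simp add: Tinv_def Tminus_apply Tact_def field_simps)

lemma Tinv_Tact: "Tinv i (Tact i z) = z"
  by (rule ext) (simp add: Tinv_def Tminus_apply Tact_def field_simps)

lemma Tminus_sum: "Tminus i (\<lambda>f. \<Sum>g\<in>G. a g * X g f) = (\<lambda>f. \<Sum>g\<in>G. a g * Tminus i (X g) f)"
  by (rule ext) (simp add: Tminus_apply sum_subtractf sum_distrib_left algebra_simps)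

lemma Tminus_Mset:
  assumes "x \<in> Mset n k" "1 \<le> i" "i < n"
  shows "Tminus i x \<in> Mset n k"
  using assms image_sg_Eset_iff[OF assms(2,3)] by (simp add: Mset_def Tminus_apply)

lemma Tact_Mset: "x \<in> Mset n k \<Longrightarrow> 1 \<le> i \<Longrightarrow> i < n \<Longrightarrow> Tact i x \<in> Mset n k"
  using Tminus_Mset[of x n k i] by (simp add: Mset_def Tminus_def)

lemma Tminus_basis_same:
  assumes "i \<in> e \<longleftrightarrow> Suc i \<in> e"
  shows "Tminus i (basis e) = (\<lambda>f. 0)"
proof
  fix f
  have "sg i ` f \<noteq> e" if "(i \<in> f) \<noteq> (Suc i \<in> f)"
  proof
    assume "sg i ` f = e"
    with assms have "i \<in> sg i ` f \<longleftrightarrow> Suc i \<in> sg i ` f"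
      by simp
    with that show False
      by simp
  qed
  moreover have "f \<noteq> e" if "(i \<in> f) \<noteq> (Suc i \<in> f)"
    using that assms by blast
  ultimately show "Tminus i (basis e) f = 0"
    by (simp add: Tminus_apply basis_def)
qed

section \<open>The elements D(e)\<close>

text \<open>The recursion follows the least descent; by canon_descent any descent gives the same
  element.\<close>

function canon :: "nat \<Rightarrow> nat \<Rightarrow> nat set \<Rightarrow> modM" where
  "canon n k e =
    (if finite e \<and> (\<exists>i. descent n e i)
     then Tminus (LEAST i. descent n e i) (canon n k (sg (LEAST i. descent n e i) ` e))
     else basis (one_seq k))"
  by auto
termination
proof (relation "measure (\<lambda>(n, k, e). \<Sum>e)")
  fix n k :: nat and e :: "nat set"
  assume "finite e \<and> (\<exists>i. descent n e i)"
  then have "descent n e (LEAST i. descent n e i)" "finite e"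
    by (auto intro: LeastI)
  then show "((n, k, sg (LEAST i. descent n e i) ` e), (n, k, e)) \<in> measure (\<lambda>(n, k, e). \<Sum>e)"
    using sum_image_sg_descent by fastforce
qed simp

declare canon.simps [simp del]

lemma canon_one_seq: "canon n k (one_seq k) = basis (one_seq k)"
  using one_seq_no_descent by (subst canon.simps) auto

lemma canon_descent:
  assumes "e \<in> Eset n k" "descent n e j"
  shows "canon n k e = Tminus j (canon n k (sg j ` e))"
  using assms
proof (induction "\<Sum>e" arbitrary: e j rule: less_induct)
  case less
  define i where "i = (LEAST i. descent n e i)"
  have i: "descent n e i"
    unfolding i_def using less.prems(2) by (rule LeastI)
  have unfold: "canon n k e = Tminus i (canon n k (sg i ` e))"
    using finite_of_Eset[OF less.prems(1)] less.prems(2) by (subst canon.simps) (auto simp: i_def)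
  show ?case
  proof (cases "j = i")
    case False
    then have far: "Suc i < j \<or> Suc j < i"
      using descents_far_apart[OF i less.prems(2)] by auto
    then have "sg i j = j" "sg i (Suc j) = Suc j" "sg j i = i" "sg j (Suc i) = Suc i"
      by (auto simp: sg_apply)
    then have ij: "descent n (sg i ` e) j" "descent n (sg j ` e) i"
      using i less.prems(2) by (simp_all add: descent_def)
    have "\<Sum>(sg i ` e) < \<Sum>e" "\<Sum>(sg j ` e) < \<Sum>e"
      using sum_image_sg_descent[OF finite_of_Eset[OF less.prems(1)]] i less.prems(2) by fastforce+
    then have "canon n k (sg i ` e) = Tminus j (canon n k (sg j ` sg i ` e))"
      and "canon n k (sg j ` e) = Tminus i (canon n k (sg i ` sg j ` e))"
      using less.hyps descent_image_sg_Eset[OF less.prems(1)] i less.prems(2) ij by blast+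
    then show ?thesis
      using unfold Tminus_commute[OF far] image_sg_commute[OF far] by simp
  qed (use unfold in simp)
qed

lemma canon_Mset:
  assumes "e \<in> Eset n k"
  shows "canon n k e \<in> Mset n k"
  using assms
proof (induction rule: Eset_descent_induct)
  case one_seq
  then show ?case
    by (auto simp: canon_one_seq basis_def Mset_def)
next
  case (descent e i)
  then show ?case
    using Tminus_Mset canon_descent by (simp add: descent_def)
qed

lemma canon_support:
  assumes "e \<in> Eset n k" "canon n k e f \<noteq> 0"
  shows "f = e \<or> \<Sum>f < \<Sum>e"
  using assms
proof (induction arbitrary: f rule: Eset_descent_induct)
  case one_seq
  then show ?case
    by (simp add: canon_one_seq basis_def split: if_splits)
next
  case (descent e i)
  let ?x = "canon n k (sg i ` e)"
  have "f \<in> Eset n k"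
    using canon_Mset[OF descent.hyps(1)] descent.prems by (auto simp: Mset_def)
  then have f: "finite f"
    by (rule finite_of_Eset)
  have "?x (sg i ` f) \<noteq> 0 \<or> ?x f \<noteq> 0"
    using descent.prems canon_descent[OF descent.hyps(1,2)] by (auto simp: Tminus_apply split: if_splits)
  then show ?case
  proof
    assume "?x (sg i ` f) \<noteq> 0"
    then have "f = e \<or> \<Sum>(sg i ` f) < \<Sum>(sg i ` e)"
      using descent.IH by (metis image_sg_image_sg)
    then show ?thesis
    proof
      assume "\<Sum>(sg i ` f) < \<Sum>(sg i ` e)"
      moreover have "\<Sum>f \<le> \<Sum>(sg i ` f) + 1"
        using sum_image_sg_le[of "sg i ` f" i] f by simp
      ultimately show ?thesis
        using descent.hyps(4) by linarith
    qed simp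
  next
    assume "?x f \<noteq> 0"
    then show ?thesis
      using descent.IH descent.hyps(4) by fastforce
  qed
qed

lemma canon_diag: "e \<in> Eset n k \<Longrightarrow> canon n k e e = 1"
proof (induction rule: Eset_descent_induct)
  case one_seq
  then show ?case
    by (simp add: canon_one_seq basis_def)
next
  case (descent e i)
  have "canon n k (sg i ` e) e = 0"
    using canon_support[OF descent.hyps(3), of e] descent.hyps(4) by fastforce
  with descent show ?case
    by (simp add: canon_descent Tminus_apply descent_def)
qed

lemma card_diff_image_sg:
  assumes "finite f" "i \<notin> e" "Suc i \<in> e"
  shows "i \<notin> f \<Longrightarrow> Suc i \<in> f \<Longrightarrow> card (f - sg i ` e) = Suc (card (f - e))"
    and "i \<in> f \<Longrightarrow> Suc i \<notin> f \<Longrightarrow> card (f - e) = Suc (card (f - sg i ` e))"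
proof -
  show "card (f - sg i ` e) = Suc (card (f - e))" if "i \<notin> f" "Suc i \<in> f"
  proof -
    have "f - sg i ` e = insert (Suc i) (f - e)"
    proof (rule set_eqI)
      fix x
      show "x \<in> f - sg i ` e \<longleftrightarrow> x \<in> insert (Suc i) (f - e)"
        using that assms by (cases "x = i"; cases "x = Suc i"; simp add: sg_apply)
    qed
    then show ?thesis
      using assms by simp
  qed
  show "card (f - e) = Suc (card (f - sg i ` e))" if "i \<in> f" "Suc i \<notin> f"
  proof -
    have "f - e = insert i (f - sg i ` e)"
    proof (rule set_eqI)
      fix x
      show "x \<in> f - e \<longleftrightarrow> x \<in> insert i (f - sg i ` e)"
        using that assms by (cases "x = i"; cases "x = Suc i"; simp add: sg_apply)
    qed
    then show ?thesis
      using assms by simp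
  qed
qed

text \<open>The exponent card (f - e) grows by one exactly where the recursion divides by v.\<close>

lemma canon_coeff_vpow_Zv:
  assumes "e \<in> Eset n k" "f \<in> Eset n k"
  shows "canon n k e f \<in> vpow_Zv (card (f - e))"
  using assms
proof (induction arbitrary: f rule: Eset_descent_induct)
  case one_seq
  then show ?case
    by (simp add: canon_one_seq basis_def one_mem_vpow_Zv_0)
next
  case (descent e i)
  let ?x = "canon n k (sg i ` e)"
  have i: "1 \<le> i" "i < n" "i \<notin> e" "Suc i \<in> e"
    using descent.hyps(2) by (simp_all add: descent_def)
  have f: "finite f"
    using finite_of_Eset[OF descent.prems] .
  have "card (sg i ` f - sg i ` e) = card (f - e)"
    by (simp add: image_set_diff[OF inj_sg, symmetric] card_image inj_on_subset[OF inj_sg])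
  then have swapped: "?x (sg i ` f) \<in> vpow_Zv (card (f - e))"
    using descent.IH[of "sg i ` f"] image_sg_Eset[OF descent.prems i(1,2)] by simp
  have unfold: "canon n k e f = Tminus i ?x f"
    using canon_descent[OF descent.hyps(1,2)] by simp
  consider "i \<in> f \<longleftrightarrow> Suc i \<in> f" | "i \<notin> f" "Suc i \<in> f" | "i \<in> f" "Suc i \<notin> f"
    by blast
  then show ?case
  proof cases
    case 1
    then show ?thesis
      by (simp add: unfold Tminus_apply)
  next
    case 2
    then have "inverse vv * ?x f \<in> vpow_Zv (card (f - e))"
      using descent.IH[OF descent.prems] card_diff_image_sg(1)[OF f i(3,4)]
      by (simp add: inverse_vv_mult_vpow_Zv)
    then show ?thesis
      using 2 swapped by (simp add: unfold Tminus_apply vpow_Zv_diff)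
  next
    case 3
    then have "vv * ?x f \<in> vpow_Zv (card (f - e))"
      using descent.IH[OF descent.prems] card_diff_image_sg(2)[OF f i(3,4)]
      by (simp add: vv_mult_vpow_Zv)
    then show ?thesis
      using 3 swapped by (simp add: unfold Tminus_apply vpow_Zv_diff)
  qed
qed

lemma canon_minus_basis_vZv:
  assumes "e \<in> Eset n k" "f \<in> Eset n k"
  shows "canon n k e f - basis e f \<in> vZv"
proof (cases "f = e")
  case True
  then show ?thesis
    using canon_diag[OF assms(1)] vZv_zero by (simp add: basis_def)
next
  case False
  have "finite e" "card f = card e"
    using assms finite_of_Eset[OF assms(1)] by (auto simp: Eset_def)
  then have "\<not> f \<subseteq> e"
    using False card_subset_eq by blast
  then have "1 \<le> card (f - e)"
    using finite_of_Eset[OF assms(2)] by (simp add: Suc_le_eq card_gt_0_iff)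
  then have "canon n k e f \<in> vZv"
    using canon_coeff_vpow_Zv[OF assms] vpow_Zv_antimono vpow_Zv_1_subset_vZv by blast
  then show ?thesis
    using False by (simp add: basis_def)
qed

section \<open>The D(e) form a basis of M'\<close>

definition canon_comb :: "nat \<Rightarrow> nat \<Rightarrow> (nat set \<Rightarrow> Qv) \<Rightarrow> modM" where
  "canon_comb n k c = (\<lambda>f. \<Sum>g\<in>Eset n k. c g * canon n k g f)"

lemma canon_comb_Mset: "canon_comb n k c \<in> Mset n k"
  using canon_Mset by (simp add: canon_comb_def Mset_def)

lemma canon_comb_cong: "(\<And>g. g \<in> Eset n k \<Longrightarrow> c g = d g) \<Longrightarrow> canon_comb n k c = canon_comb n k d"
  unfolding canon_comb_def by (rule ext) (rule sum.cong, auto)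

lemma canon_comb_add: "canon_comb n k (\<lambda>g. c g + d g) = (\<lambda>f. canon_comb n k c f + canon_comb n k d f)"
  by (rule ext) (simp add: canon_comb_def algebra_simps sum.distrib)

lemma canon_comb_scale: "canon_comb n k (\<lambda>g. x * c g) = (\<lambda>f. x * canon_comb n k c f)"
  by (rule ext) (simp add: canon_comb_def sum_distrib_left mult.assoc)

lemma canon_comb_diff: "canon_comb n k (\<lambda>g. c g - d g) = (\<lambda>f. canon_comb n k c f - canon_comb n k d f)"
  by (rule ext) (simp add: canon_comb_def algebra_simps sum_subtractf)

lemma canon_comb_single:
  assumes "e \<in> Eset n k"
  shows "canon_comb n k (\<lambda>g. if g = e then x else 0) = (\<lambda>f. x * canon n k e f)"
proof
  fix f
  have "(\<Sum>g\<in>Eset n k. (if g = e then x else 0) * canon n k g f) =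
      (\<Sum>g\<in>Eset n k. if g = e then x * canon n k e f else 0)"
    by (rule sum.cong) auto
  then show "canon_comb n k (\<lambda>g. if g = e then x else 0) f = x * canon n k e f"
    using assms by (simp add: canon_comb_def)
qed

lemma canon_comb_sum:
  assumes "finite G" "\<And>g. g \<in> G \<Longrightarrow> a g \<noteq> 0 \<Longrightarrow> X g = canon_comb n k (c g)"
  shows "(\<lambda>f. \<Sum>g\<in>G. a g * X g f) = canon_comb n k (\<lambda>h. \<Sum>g\<in>G. a g * c g h)"
proof
  fix f
  have "(\<Sum>g\<in>G. a g * X g f) = (\<Sum>g\<in>G. a g * canon_comb n k (c g) f)"
    using assms(2) by (metis (no_types, lifting) mult_zero_left sum.cong)
  also have "\<dots> = (\<Sum>h\<in>Eset n k. \<Sum>g\<in>G. a g * (c g h * canon n k h f))"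
    by (simp add: canon_comb_def sum_distrib_left sum.swap[of _ G])
  also have "\<dots> = canon_comb n k (\<lambda>h. \<Sum>g\<in>G. a g * c g h) f"
    by (simp add: canon_comb_def sum_distrib_right mult.assoc)
  finally show "(\<Sum>g\<in>G. a g * X g f) = canon_comb n k (\<lambda>h. \<Sum>g\<in>G. a g * c g h) f" .
qed

lemma range_canon_comb_sum:
  assumes "finite G" "\<And>g. g \<in> G \<Longrightarrow> a g \<noteq> 0 \<Longrightarrow> X g \<in> range (canon_comb n k)"
  shows "(\<lambda>f. \<Sum>g\<in>G. a g * X g f) \<in> range (canon_comb n k)"
proof -
  define c where "c g = inv (canon_comb n k) (X g)" for g
  have "X g = canon_comb n k (c g)" if "g \<in> G" "a g \<noteq> 0" for g
    using assms(2)[OF that] by (simp add: c_def f_inv_into_f)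
  from canon_comb_sum[OF assms(1) this] show ?thesis
    by simp
qed

text \<open>By unitriangularity only D(g) itself contributes at g.\<close>

lemma canon_comb_at_top:
  assumes "g \<in> Eset n k" "\<And>h. h \<in> Eset n k \<Longrightarrow> c h \<noteq> 0 \<Longrightarrow> \<Sum>h \<le> \<Sum>g"
  shows "canon_comb n k c g = c g"
proof -
  have "c h * canon n k h g = 0" if "h \<in> Eset n k - {g}" for h
    using that assms(2)[of h] canon_support[of h n k g] by fastforce
  then have "(\<Sum>h\<in>Eset n k - {g}. c h * canon n k h g) = 0"
    by (rule sum.neutral[OF ballI])
  then have "canon_comb n k c g = c g * canon n k g g"
    using assms(1) by (simp add: canon_comb_def sum.remove)
  then show ?thesis
    using canon_diag[OF assms(1)] by simp
qed

lemma canon_comb_at_max: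
  assumes "g \<in> Eset n k" "c g \<noteq> 0"
  obtains h where "h \<in> Eset n k" "c h \<noteq> 0" "canon_comb n k c h = c h"
proof -
  let ?S = "{h \<in> Eset n k. c h \<noteq> 0}"
  have S: "finite ?S" "g \<in> ?S"
    using assms by simp_all
  then have "Max ((\<lambda>h. \<Sum>h) ` ?S) \<in> (\<lambda>h. \<Sum>h) ` ?S"
    by (intro Max_in) auto
  then obtain h where h: "h \<in> ?S" "Max ((\<lambda>h. \<Sum>h) ` ?S) = \<Sum>h"
    unfolding image_iff by (elim bexE)
  have top: "\<Sum>h' \<le> \<Sum>h" if "h' \<in> ?S" for h'
    unfolding h(2)[symmetric] using S(1) that by (intro Max_ge) simp_all
  show ?thesis
  proof (rule that)
    show "h \<in> Eset n k" "c h \<noteq> 0"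
      using h(1) by simp_all
    show "canon_comb n k c h = c h"
      by (rule canon_comb_at_top) (use h(1) top in simp_all)
  qed
qed

lemma canon_comb_inj:
  assumes "canon_comb n k c = canon_comb n k d" "g \<in> Eset n k"
  shows "c g = d g"
proof (rule ccontr)
  assume "c g \<noteq> d g"
  then obtain h where "h \<in> Eset n k" "c h - d h \<noteq> 0" "canon_comb n k (\<lambda>g. c g - d g) h = c h - d h"
    using canon_comb_at_max[of g n k "\<lambda>g. c g - d g"] assms(2) by auto
  then show False
    using assms(1) by (simp add: canon_comb_diff)
qed

lemma basis_in_range_canon_comb: "e \<in> Eset n k \<Longrightarrow> basis e \<in> range (canon_comb n k)"
proof (induction "\<Sum>e" arbitrary: e rule: less_induct)
  case less
  let ?rest = "\<lambda>f. \<Sum>g\<in>Eset n k - {e}. canon n k e g * basis g f"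
  have split: "basis e = (\<lambda>f. canon n k e f - ?rest f)"
  proof
    fix f
    have "?rest f = (\<Sum>g\<in>Eset n k - {e}. if g = f then canon n k e f else 0)"
      by (rule sum.cong) (auto simp: basis_def)
    then have "?rest f = (if f \<in> Eset n k - {e} then canon n k e f else 0)"
      by simp
    then show "basis e f = canon n k e f - ?rest f"
      using canon_diag[OF less.prems] canon_Mset[OF less.prems] less.prems
      by (auto simp: basis_def Mset_def)
  qed
  have canon: "canon n k e = canon_comb n k (\<lambda>g. if g = e then 1 else 0)"
    using canon_comb_single[OF less.prems, of 1] by simp
  have "?rest \<in> range (canon_comb n k)"
  proof (rule range_canon_comb_sum)
    fix g
    assume g: "g \<in> Eset n k - {e}" "canon n k e g \<noteq> 0"
    then have "\<Sum>g < \<Sum>e"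
      using canon_support[OF less.prems g(2)] by auto
    with g(1) show "basis g \<in> range (canon_comb n k)"
      by (simp add: less.hyps)
  qed simp
  then obtain c where rest: "?rest = canon_comb n k c"
    by blast
  have "basis e = canon_comb n k (\<lambda>g. (if g = e then 1 else 0) - c g)"
    unfolding canon_comb_diff canon[symmetric] rest[symmetric] by (rule split)
  then show ?case
    by blast
qed

lemma Mset_eq_range_canon_comb: "Mset n k = range (canon_comb n k)"
proof
  show "Mset n k \<subseteq> range (canon_comb n k)"
  proof
    fix m
    assume "m \<in> Mset n k"
    then have "m = (\<lambda>f. \<Sum>g\<in>Eset n k. m g * basis g f)"
      by (auto simp: Mset_def basis_def if_distrib sum.delta cong: if_cong)
    also have "\<dots> \<in> range (canon_comb n k)"
      by (rule range_canon_comb_sum) (simp_all add: basis_in_range_canon_comb)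
    finally show "m \<in> range (canon_comb n k)" .
  qed
qed (auto simp: canon_comb_Mset)

section \<open>The bar involution of M'\<close>

definition coords :: "nat \<Rightarrow> nat \<Rightarrow> modM \<Rightarrow> nat set \<Rightarrow> Qv" where
  "coords n k m = (SOME c. canon_comb n k c = restrM n k m)"

lemma restrM_Mset: "restrM n k m \<in> Mset n k"
  by (simp add: restrM_def Mset_def)

lemma restrM_id: "m \<in> Mset n k \<Longrightarrow> restrM n k m = m"
  by (auto simp: restrM_def Mset_def)

lemma canon_comb_coords: "canon_comb n k (coords n k m) = restrM n k m"
proof -
  have "restrM n k m \<in> range (canon_comb n k)"
    using restrM_Mset by (simp add: Mset_eq_range_canon_comb)
  then obtain c where "restrM n k m = canon_comb n k c"
    by (rule rangeE)
  then show ?thesis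
    unfolding coords_def by (metis (mono_tags) someI)
qed

lemma coords_canon_comb:
  assumes "g \<in> Eset n k"
  shows "coords n k (canon_comb n k c) g = c g"
proof (rule canon_comb_inj[OF _ assms])
  show "canon_comb n k (coords n k (canon_comb n k c)) = canon_comb n k c"
    by (simp add: canon_comb_coords restrM_id canon_comb_Mset)
qed

definition bar_coords :: "nat \<Rightarrow> nat \<Rightarrow> modM \<Rightarrow> modM" where
  "bar_coords n k m = canon_comb n k (\<lambda>g. barQ (coords n k m g))"

lemma bar_coords_canon_comb: "bar_coords n k (canon_comb n k c) = canon_comb n k (\<lambda>g. barQ (c g))"
  unfolding bar_coords_def by (rule canon_comb_cong) (simp add: coords_canon_comb)

lemma bar_coords_restrM: "bar_coords n k (restrM n k m) = bar_coords n k m"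
  by (simp add: bar_coords_def coords_def restrM_id restrM_Mset)

lemma bar_coords_add:
  assumes "m1 \<in> Mset n k" "m2 \<in> Mset n k"
  shows "bar_coords n k (\<lambda>f. m1 f + m2 f) = (\<lambda>f. bar_coords n k m1 f + bar_coords n k m2 f)"
proof -
  obtain c1 c2 where "m1 = canon_comb n k c1" "m2 = canon_comb n k c2"
    using assms by (auto simp: Mset_eq_range_canon_comb)
  then show ?thesis
    by (simp add: bar_coords_canon_comb flip: canon_comb_add)
qed

lemma bar_coords_scale:
  assumes "m \<in> Mset n k"
  shows "bar_coords n k (\<lambda>f. x * m f) = (\<lambda>f. barQ x * bar_coords n k m f)"
proof -
  obtain c where "m = canon_comb n k c"
    using assms by (auto simp: Mset_eq_range_canon_comb)
  then show ?thesis
    by (simp add: bar_coords_canon_comb flip: canon_comb_scale)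
qed

lemma bar_coords_diff:
  assumes "m1 \<in> Mset n k" "m2 \<in> Mset n k"
  shows "bar_coords n k (\<lambda>f. m1 f - m2 f) = (\<lambda>f. bar_coords n k m1 f - bar_coords n k m2 f)"
proof -
  obtain c1 c2 where "m1 = canon_comb n k c1" "m2 = canon_comb n k c2"
    using assms by (auto simp: Mset_eq_range_canon_comb)
  then show ?thesis
    by (simp add: bar_coords_canon_comb flip: canon_comb_diff)
qed

definition bar_comb_below :: "nat \<Rightarrow> nat \<Rightarrow> nat \<Rightarrow> modM \<Rightarrow> bool" where
  "bar_comb_below n k s m \<longleftrightarrow> (\<exists>c. m = canon_comb n k c \<and> (\<forall>g. barQ (c g) = c g) \<and>
     (\<forall>g\<in>Eset n k. c g \<noteq> 0 \<longrightarrow> \<Sum>g < s))"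

lemma bar_comb_below_mono: "bar_comb_below n k s m \<Longrightarrow> s \<le> t \<Longrightarrow> bar_comb_below n k t m"
  unfolding bar_comb_below_def by (fastforce elim: order_less_le_trans)

lemma bar_comb_below_zero: "bar_comb_below n k s (\<lambda>f. 0)"
  unfolding bar_comb_below_def by (intro exI[of _ "\<lambda>g. 0"]) (simp add: canon_comb_def)

lemma bar_comb_below_scaled_canon:
  assumes "e \<in> Eset n k" "barQ x = x"
  shows "bar_comb_below n k (\<Sum>e + 1) (\<lambda>f. x * canon n k e f)"
  unfolding bar_comb_below_def
  by (intro exI[of _ "\<lambda>g. if g = e then x else 0"]) (simp add: canon_comb_single[OF assms(1)] assms(2))

lemma bar_comb_below_Tminus:
  assumes "bar_comb_below n k s m"
    and "\<And>g. g \<in> Eset n k \<Longrightarrow> \<Sum>g < s \<Longrightarrow> bar_comb_below n k (\<Sum>g + 2) (Tminus j (canon n k g))"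
  shows "bar_comb_below n k (s + 1) (Tminus j m)"
proof -
  obtain c where c: "m = canon_comb n k c" "\<And>g. barQ (c g) = c g"
    "\<And>g. g \<in> Eset n k \<Longrightarrow> c g \<noteq> 0 \<Longrightarrow> \<Sum>g < s"
    using assms(1) unfolding bar_comb_below_def by blast
  define R where "R g = (SOME r. Tminus j (canon n k g) = canon_comb n k r \<and> (\<forall>h. barQ (r h) = r h) \<and>
      (\<forall>h\<in>Eset n k. r h \<noteq> 0 \<longrightarrow> \<Sum>h < \<Sum>g + 2))" for g
  have R: "Tminus j (canon n k g) = canon_comb n k (R g) \<and> (\<forall>h. barQ (R g h) = R g h) \<and>
      (\<forall>h\<in>Eset n k. R g h \<noteq> 0 \<longrightarrow> \<Sum>h < \<Sum>g + 2)" if "g \<in> Eset n k" "c g \<noteq> 0" for g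
    using assms(2)[OF that(1) c(3)[OF that]] unfolding R_def bar_comb_below_def by (rule someI_ex)
  define d where "d h = (\<Sum>g\<in>Eset n k. c g * R g h)" for h
  have "Tminus j m = (\<lambda>f. \<Sum>g\<in>Eset n k. c g * Tminus j (canon n k g) f)"
    unfolding c(1) canon_comb_def by (rule Tminus_sum)
  also have "\<dots> = canon_comb n k d"
    unfolding d_def by (rule canon_comb_sum) (simp_all add: R)
  finally have "Tminus j m = canon_comb n k d" .
  moreover have "barQ (d h) = d h" for h
    unfolding d_def barQ_sum by (rule sum.cong) (use R c(2) in \<open>auto simp: barQ_mult\<close>)
  moreover have "\<Sum>h < s + 1" if h: "h \<in> Eset n k" "d h \<noteq> 0" for h
  proof -
    obtain g where "g \<in> Eset n k" "c g * R g h \<noteq> 0"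
      using h(2) unfolding d_def by (meson sum.not_neutral_contains_not_neutral)
    then have "\<Sum>h < \<Sum>g + 2" "\<Sum>g < s"
      using R c(3) h(1) by auto
    then show ?thesis
      by linarith
  qed
  ultimately show ?thesis
    unfolding bar_comb_below_def by blast
qed

lemma Tminus_canon_descent:
  assumes "e \<in> Eset n k" "descent n e i"
  shows "Tminus i (canon n k e) = (\<lambda>f. - (vv + inverse vv) * canon n k e f)"
  using canon_descent[OF assms] by (simp add: Tminus_square)

lemma Tminus_canon_ascent:
  assumes "e \<in> Eset n k" "1 \<le> i" "i < n" "i \<in> e" "Suc i \<notin> e"
  shows "Tminus i (canon n k e) = canon n k (sg i ` e)"
proof -
  have "descent n (sg i ` e) i"
    using assms by (simp add: descent_def)
  from canon_descent[OF image_sg_Eset[OF assms(1-3)] this] show ?thesis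
    by simp
qed

lemma Tminus_canon_adjacent:
  assumes "e \<in> Eset n k" "1 \<le> i" "i < n" "descent n e j" "i \<in> e \<longleftrightarrow> Suc i \<in> e"
    and "j = Suc i \<or> Suc j = i"
  shows "Tminus i (canon n k e) = canon n k (sg j ` e)"
proof -
  have e': "sg j ` e \<in> Eset n k"
    using descent_image_sg_Eset[OF assms(1,4)] .
  have sg: "sg i (Suc (Suc i)) = Suc (Suc i)" "sg (Suc i) i = i" for i
    by (simp_all add: sg_apply)
  have "descent n (sg j ` e) i"
    using assms(2-6) sg by (auto simp: descent_def)
  note step = canon_descent[OF e' this]
  show ?thesis
  proof (cases "j = Suc i")
    case True
    then show ?thesis
      using canon_descent[OF assms(1,4)] step Tminus_braid(1) by simp
  next
    case False
    then have "i = Suc j"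
      using assms(6) by simp
    then show ?thesis
      using canon_descent[OF assms(1,4)] step Tminus_braid(2) by simp
  qed
qed

text \<open>The sharper bound for e without a pattern (+,-) or (-,+) at i is what the far case needs:
  there T_i - v commutes past the descent step, and the induction hypothesis is applied at
  s_j e and then at every D(g) occurring in the result.\<close>

lemma Tminus_canon_bar_comb:
  assumes "e \<in> Eset n k" "1 \<le> i" "i < n"
  shows "bar_comb_below n k (if i \<in> e \<longleftrightarrow> Suc i \<in> e then \<Sum>e else \<Sum>e + 2) (Tminus i (canon n k e))"
  using assms
proof (induction "\<Sum>e" arbitrary: e i rule: less_induct)
  case less
  note e = less.prems(1) and i = less.prems(2,3)
  consider (descent) "i \<notin> e" "Suc i \<in> e" | (ascent) "i \<in> e" "Suc i \<notin> e"
    | (one_seq) "i \<in> e \<longleftrightarrow> Suc i \<in> e" "e = one_seq k"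
    | (flat) "i \<in> e \<longleftrightarrow> Suc i \<in> e" "e \<noteq> one_seq k"
    by blast
  then show ?case
  proof cases
    case descent
    then have "descent n e i"
      using i by (simp add: descent_def)
    then show ?thesis
      using descent bar_comb_below_scaled_canon[OF e, of "- (vv + inverse vv)"]
      by (simp add: Tminus_canon_descent[OF e] bar_comb_below_mono add.commute)
  next
    case ascent
    have "\<Sum>(sg i ` e) = \<Sum>e + 1"
      using sum_image_sg_up[OF finite_of_Eset[OF e] ascent] .
    then show ?thesis
      using ascent bar_comb_below_scaled_canon[OF image_sg_Eset[OF e i], of 1]
      by (simp add: Tminus_canon_ascent[OF e i ascent])
  next
    case one_seq
    then show ?thesis
      by (simp add: canon_one_seq Tminus_basis_same bar_comb_below_zero)
  next
    case flat
    obtain j where j: "descent n e j"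
      using Eset_has_descent[OF e flat(2)] .
    have e': "sg j ` e \<in> Eset n k" and sum_e': "\<Sum>(sg j ` e) + 1 = \<Sum>e"
      using descent_image_sg_Eset[OF e j] sum_image_sg_descent[OF finite_of_Eset[OF e] j] .
    have "j \<noteq> i"
      using j flat(1) by (auto simp: descent_def)
    then consider "j = Suc i \<or> Suc j = i" | (far) "Suc i < j \<or> Suc j < i"
      by linarith
    then show ?thesis
    proof cases
      case 1
      then show ?thesis
        using Tminus_canon_adjacent[OF e i j flat(1) 1] bar_comb_below_scaled_canon[OF e', of 1] sum_e' flat
        by simp
    next
      case far
      have "sg j i = i" "sg j (Suc i) = Suc i"
        using far by (auto simp: sg_apply)
      then have flat': "i \<in> sg j ` e \<longleftrightarrow> Suc i \<in> sg j ` e"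
        using flat(1) by simp
      have "Tminus i (canon n k e) = Tminus j (Tminus i (canon n k (sg j ` e)))"
        using canon_descent[OF e j] Tminus_commute[OF far] by simp
      moreover have "bar_comb_below n k (\<Sum>(sg j ` e)) (Tminus i (canon n k (sg j ` e)))"
        using less.hyps[OF _ e' i] sum_e' flat' by simp
      moreover have "bar_comb_below n k (\<Sum>g + 2) (Tminus j (canon n k g))"
        if "g \<in> Eset n k" "\<Sum>g < \<Sum>(sg j ` e)" for g
        using less.hyps[of g j] that j sum_e' bar_comb_below_mono
        by (simp add: descent_def split: if_splits)
      ultimately show ?thesis
        using bar_comb_below_Tminus[of n k "\<Sum>(sg j ` e)"] sum_e' flat by simp
    qed
  qed
qed

lemma Tminus_canon_bar_invariant:
  assumes "e \<in> Eset n k" "1 \<le> i" "i < n"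
  shows "\<exists>r. Tminus i (canon n k e) = canon_comb n k r \<and> (\<forall>h. barQ (r h) = r h)"
  using Tminus_canon_bar_comb[OF assms] unfolding bar_comb_below_def by blast

lemma bar_coords_Tminus:
  assumes "m \<in> Mset n k" "1 \<le> i" "i < n"
  shows "bar_coords n k (Tminus i m) = Tminus i (bar_coords n k m)"
proof -
  obtain c where m: "m = canon_comb n k c"
    using assms(1) by (auto simp: Mset_eq_range_canon_comb)
  define R where "R g = (SOME r. Tminus i (canon n k g) = canon_comb n k r \<and> (\<forall>h. barQ (r h) = r h))"
    for g
  have R: "Tminus i (canon n k g) = canon_comb n k (R g) \<and> (\<forall>h. barQ (R g h) = R g h)"
    if "g \<in> Eset n k" for g
    using Tminus_canon_bar_invariant[OF that assms(2,3)] unfolding R_def by (rule someI_ex)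
  have Tminus_comb: "Tminus i (canon_comb n k a) = canon_comb n k (\<lambda>h. \<Sum>g\<in>Eset n k. a g * R g h)" for a
    unfolding canon_comb_def[of n k a] Tminus_sum by (rule canon_comb_sum) (simp_all add: R)
  have "bar_coords n k (Tminus i m) = canon_comb n k (\<lambda>h. \<Sum>g\<in>Eset n k. barQ (c g) * R g h)"
    unfolding m Tminus_comb bar_coords_canon_comb barQ_sum
    by (rule canon_comb_cong) (simp add: R)
  also have "\<dots> = Tminus i (bar_coords n k m)"
    unfolding m bar_coords_canon_comb Tminus_comb ..
  finally show ?thesis .
qed

lemma bar_coords_is_barM:
  assumes "k \<le> n"
  shows "is_barM n k (bar_coords n k)"
  unfolding is_barM_def
proof (intro conjI ballI allI)
  show "bar_coords n k m = bar_coords n k (restrM n k m)" for m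
    by (simp add: bar_coords_restrM)
  show "bar_coords n k m \<in> Mset n k" for m
    by (simp add: bar_coords_def canon_comb_Mset)
  show "bar_coords n k (\<lambda>e. m1 e + m2 e) = (\<lambda>e. bar_coords n k m1 e + bar_coords n k m2 e)"
    if "m1 \<in> Mset n k" "m2 \<in> Mset n k" for m1 m2
    using bar_coords_add[OF that] .
  show "bar_coords n k (\<lambda>e. c * m e) = (\<lambda>e. barQ c * bar_coords n k m e)" if "m \<in> Mset n k" for c m
    using bar_coords_scale[OF that] .
  show "bar_coords n k (basis (one_seq k)) = basis (one_seq k)"
  proof -
    have one: "basis (one_seq k) = canon_comb n k (\<lambda>g. if g = one_seq k then 1 else 0)"
      using canon_comb_single[OF one_seq_Eset[OF assms], of 1] by (simp add: canon_one_seq)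
    have "(\<lambda>g. barQ (if g = one_seq k then 1 else 0)) = (\<lambda>g. if g = one_seq k then 1 else 0)"
      by auto
    then show ?thesis
      unfolding one bar_coords_canon_comb by simp
  qed
  show "Tact i (bar_coords n k (Tact i m)) = bar_coords n k m" if "i \<in> {1..<n}" "m \<in> Mset n k" for i m
  proof -
    have i: "1 \<le> i" "i < n"
      using that(1) by simp_all
    have "Tact i m = (\<lambda>f. Tminus i m f + vv * m f)"
      by (simp add: Tminus_def)
    moreover have "Tminus i m \<in> Mset n k" "(\<lambda>f. vv * m f) \<in> Mset n k"
      using Tminus_Mset[OF that(2) i] that(2) by (simp_all add: Mset_def)
    ultimately have "bar_coords n k (Tact i m) =
        (\<lambda>f. bar_coords n k (Tminus i m) f + bar_coords n k (\<lambda>f. vv * m f) f)"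
      by (simp add: bar_coords_add)
    also have "\<dots> = Tinv i (bar_coords n k m)"
      by (simp add: bar_coords_Tminus[OF that(2) i] bar_coords_scale[OF that(2)] Tinv_def)
    finally show ?thesis
      by (simp add: Tact_Tinv)
  qed
qed

lemma is_barM_add:
  "is_barM n k b \<Longrightarrow> m1 \<in> Mset n k \<Longrightarrow> m2 \<in> Mset n k \<Longrightarrow>
    b (\<lambda>f. m1 f + m2 f) = (\<lambda>f. b m1 f + b m2 f)"
  unfolding is_barM_def by blast

lemma is_barM_scale:
  "is_barM n k b \<Longrightarrow> m \<in> Mset n k \<Longrightarrow> b (\<lambda>f. c * m f) = (\<lambda>f. barQ c * b m f)"
  unfolding is_barM_def by blast

lemma is_barM_zero:
  assumes "is_barM n k b"
  shows "b (\<lambda>f. 0) = (\<lambda>f. 0)"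
  using is_barM_scale[OF assms, of "\<lambda>f. 0" 0] by (simp add: Mset_def)

lemma is_barM_Tminus:
  assumes "is_barM n k b" "x \<in> Mset n k" "1 \<le> i" "i < n"
  shows "b (Tminus i x) = Tminus i (b x)"
proof -
  have eq: "Tminus i x = (\<lambda>f. Tact i x f + (- vv) * x f)"
    by (simp add: Tminus_def)
  have "Tact i x \<in> Mset n k" "(\<lambda>f. (- vv) * x f) \<in> Mset n k"
    using Tact_Mset[OF assms(2-4)] assms(2) by (simp_all add: Mset_def)
  then have "b (Tminus i x) = (\<lambda>f. b (Tact i x) f + b (\<lambda>f. (- vv) * x f) f)"
    unfolding eq by (rule is_barM_add[OF assms(1)])
  also have "b (\<lambda>f. (- vv) * x f) = (\<lambda>f. - inverse vv * b x f)"
    using is_barM_scale[OF assms(1,2), of "- vv"] by simp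
  also have "b (Tact i x) = Tinv i (b x)"
    using Tinv_Tact[of i "b (Tact i x)"] assms unfolding is_barM_def by simp
  finally show ?thesis
    by (simp add: Tinv_def)
qed

lemma is_barM_canon:
  assumes "is_barM n k b" "e \<in> Eset n k"
  shows "b (canon n k e) = canon n k e"
  using assms(2)
proof (induction rule: Eset_descent_induct)
  case one_seq
  then show ?case
    using assms(1) by (simp add: is_barM_def canon_one_seq)
next
  case (descent e i)
  then show ?case
    using is_barM_Tminus[OF assms(1) canon_Mset[OF descent.hyps(3)]]
    by (simp add: canon_descent descent_def)
qed

lemma is_barM_sum:
  assumes "is_barM n k b" "finite G" "\<And>g. g \<in> G \<Longrightarrow> X g \<in> Mset n k"
  shows "b (\<lambda>f. \<Sum>g\<in>G. a g * X g f) = (\<lambda>f. \<Sum>g\<in>G. barQ (a g) * b (X g) f)"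
  using assms(2,3)
proof (induction G rule: finite_induct)
  case empty
  then show ?case
    using is_barM_zero[OF assms(1)] by simp
next
  case (insert g G)
  have "(\<lambda>f. a g * X g f) \<in> Mset n k" "(\<lambda>f. \<Sum>g\<in>G. a g * X g f) \<in> Mset n k"
    using insert.prems by (simp_all add: Mset_def)
  with insert show ?case
    by (simp add: is_barM_add[OF assms(1)] is_barM_scale[OF assms(1)])
qed

lemma is_barM_eq_bar_coords:
  assumes "is_barM n k b"
  shows "b = bar_coords n k"
proof
  fix m
  have "b m = b (restrM n k m)"
    using assms by (simp add: is_barM_def)
  also have "\<dots> = b (\<lambda>f. \<Sum>g\<in>Eset n k. coords n k m g * canon n k g f)"
    using canon_comb_coords[of n k m] by (simp add: canon_comb_def)
  also have "\<dots> = canon_comb n k (\<lambda>g. barQ (coords n k m g))"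
    using is_barM_sum[OF assms finite_Eset canon_Mset] is_barM_canon[OF assms]
    by (simp add: canon_comb_def)
  finally show "b m = bar_coords n k m"
    by (simp add: bar_coords_def)
qed

lemma barM_eq_bar_coords: "k \<le> n \<Longrightarrow> barM n k = bar_coords n k"
  unfolding barM_def using bar_coords_is_barM is_barM_eq_bar_coords by (rule the_equality)

section \<open>Identification with the parabolic Kazhdan-Lusztig basis\<close>

lemma bar_invariant_vZv_eq_zero:
  assumes "m \<in> Mset n k" "bar_coords n k m = m" "\<And>f. f \<in> Eset n k \<Longrightarrow> m f \<in> vZv"
  shows "m = (\<lambda>f. 0)"
proof -
  obtain c where m: "m = canon_comb n k c"
    using assms(1) by (auto simp: Mset_eq_range_canon_comb)
  have bar: "barQ (c g) = c g" if "g \<in> Eset n k" for g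
    using canon_comb_inj[OF _ that] assms(2) by (simp add: m bar_coords_canon_comb)
  have "c g = 0" if g: "g \<in> Eset n k" for g
  proof (rule ccontr)
    assume "c g \<noteq> 0"
    then obtain h where h: "h \<in> Eset n k" "c h \<noteq> 0" "canon_comb n k c h = c h"
      using canon_comb_at_max[OF g] by blast
    then have "c h \<in> vZv"
      using assms(3)[OF h(1)] by (simp add: m)
    then show False
      using vZv_barQ_fixed_eq_0 bar[OF h(1)] h(2) by blast
  qed
  then show ?thesis
    by (simp add: m canon_comb_def)
qed

lemma parKL_eq_canon:
  assumes "k \<le> n" "w ` one_seq k \<in> Eset n k"
  shows "parKL n k w = canon n k (w ` one_seq k)"
  unfolding parKL_def barM_eq_bar_coords[OF assms(1)]
proof (rule the_equality)
  let ?e = "w ` one_seq k"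
  show "canon n k ?e \<in> Mset n k \<and> bar_coords n k (canon n k ?e) = canon n k ?e \<and>
      (\<forall>f\<in>Eset n k. canon n k ?e f - basis ?e f \<in> vZv)"
    using canon_Mset[OF assms(2)] is_barM_canon[OF bar_coords_is_barM[OF assms(1)] assms(2)]
      canon_minus_basis_vZv[OF assms(2)] by simp
  fix m
  assume m: "m \<in> Mset n k \<and> bar_coords n k m = m \<and> (\<forall>f\<in>Eset n k. m f - basis ?e f \<in> vZv)"
  let ?d = "\<lambda>f. m f - canon n k ?e f"
  have "?d = (\<lambda>f. 0)"
  proof (rule bar_invariant_vZv_eq_zero)
    show "?d \<in> Mset n k"
      using m canon_Mset[OF assms(2)] by (simp add: Mset_def)
    show "bar_coords n k ?d = ?d"
      using m canon_Mset[OF assms(2)] is_barM_canon[OF bar_coords_is_barM[OF assms(1)] assms(2)]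
      by (simp add: bar_coords_diff)
    show "?d f \<in> vZv" if "f \<in> Eset n k" for f
    proof -
      have "m f - basis ?e f - (canon n k ?e f - basis ?e f) \<in> vZv"
        using vZv_diff canon_minus_basis_vZv[OF assms(2) that] m that by blast
      then show ?thesis
        by simp
    qed
  qed
  then show "m = canon n k ?e"
    by (metis (no_types) eq_iff_diff_eq_0 ext)
qed

section \<open>Reduced words of minimal coset representatives\<close>

lemma wordprod_Cons: "wordprod (i # ws) = sg i \<circ> wordprod ws"
  by (simp add: wordprod_def)

lemma image_wordprod_Cons: "wordprod (i # ws) ` A = sg i ` wordprod ws ` A"
  by (simp add: wordprod_Cons image_comp)

lemma is_word_Cons: "is_word n (i # ws) \<longleftrightarrow> 1 \<le> i \<and> i < n \<and> is_word n ws"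
  by (auto simp: is_word_def)

lemma wordprod_Eset: "is_word n ws \<Longrightarrow> k \<le> n \<Longrightarrow> wordprod ws ` one_seq k \<in> Eset n k"
proof (induction ws)
  case (Cons i ws)
  then show ?case
    by (simp add: image_wordprod_Cons is_word_Cons image_sg_Eset)
qed (simp add: wordprod_def one_seq_Eset)

lemma sum_wordprod_le:
  "is_word n ws \<Longrightarrow> k \<le> n \<Longrightarrow> \<Sum>(wordprod ws ` one_seq k) \<le> \<Sum>(one_seq k) + length ws"
proof (induction ws)
  case (Cons i ws)
  have ws: "is_word n ws"
    using Cons.prems(1) by (simp add: is_word_Cons)
  have "\<Sum>(wordprod (i # ws) ` one_seq k) = \<Sum>(sg i ` wordprod ws ` one_seq k)"
    by (simp add: image_wordprod_Cons)
  also have "\<dots> \<le> \<Sum>(wordprod ws ` one_seq k) + 1"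
    by (rule sum_image_sg_le[OF finite_of_Eset[OF wordprod_Eset[OF ws Cons.prems(2)]]])
  finally show ?case
    using Cons.IH[OF ws Cons.prems(2)] by simp
qed (simp add: wordprod_def)

text \<open>If every letter raises the position sum, every letter is an ascent, so the word
  builds D(e) step by step.\<close>

lemma Tminus_word_eq_canon:
  assumes "is_word n ws" "k \<le> n" "\<Sum>(wordprod ws ` one_seq k) = \<Sum>(one_seq k) + length ws"
  shows "Tminus_word ws (basis (one_seq k)) = canon n k (wordprod ws ` one_seq k)"
  using assms
proof (induction ws)
  case Nil
  then show ?case
    by (simp add: wordprod_def Tminus_word_def canon_one_seq)
next
  case (Cons i ws)
  let ?e = "wordprod ws ` one_seq k"
  have ws: "is_word n ws" and i: "1 \<le> i" "i < n"
    using Cons.prems(1) by (simp_all add: is_word_Cons)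
  have e: "?e \<in> Eset n k"
    using wordprod_Eset[OF ws Cons.prems(2)] .
  have img: "wordprod (i # ws) ` one_seq k = sg i ` ?e"
    by (rule image_wordprod_Cons)
  have "\<Sum>(sg i ` ?e) \<le> \<Sum>?e + 1"
    using sum_image_sg_le[OF finite_of_Eset[OF e]] .
  then have sums: "\<Sum>?e = \<Sum>(one_seq k) + length ws" "\<Sum>(sg i ` ?e) = \<Sum>?e + 1"
    using Cons.prems(3) sum_wordprod_le[OF ws Cons.prems(2)] img by simp_all
  have "i \<in> ?e" "Suc i \<notin> ?e"
    using sums(2) sum_image_sg_down[OF finite_of_Eset[OF e], of i] image_sg_eq_self[of i ?e]
    by (cases "i \<in> ?e"; cases "Suc i \<in> ?e"; simp)+
  then show ?case
    using Cons.IH[OF ws Cons.prems(2) sums(1)] Tminus_canon_ascent[OF e i] img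
    by (simp add: Tminus_word_Cons)
qed

lemma Eset_reached_by_word:
  assumes "e \<in> Eset n k"
  obtains ws where "is_word n ws" "wordprod ws ` one_seq k = e" "\<Sum>(one_seq k) + length ws = \<Sum>e"
proof -
  have "\<exists>ws. is_word n ws \<and> wordprod ws ` one_seq k = e \<and> \<Sum>(one_seq k) + length ws = \<Sum>e"
    using assms
  proof (induction rule: Eset_descent_induct)
    case one_seq
    show ?case
      by (rule exI[of _ "[]"]) (simp add: is_word_def wordprod_def)
  next
    case (descent e i)
    then obtain ws where "is_word n ws" "wordprod ws ` one_seq k = sg i ` e"
      "\<Sum>(one_seq k) + length ws = \<Sum>(sg i ` e)"
      by blast
    with descent.hyps(2,4) show ?case
      by (intro exI[of _ "i # ws"]) (auto simp: is_word_Cons image_wordprod_Cons descent_def)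
  qed
  then show ?thesis
    using that by blast
qed

lemma wordprod_permutes: "is_word n ws \<Longrightarrow> wordprod ws permutes {1..n}"
proof (induction ws)
  case (Cons i ws)
  then have "sg i permutes {1..n}"
    unfolding sg_def by (intro permutes_swap_id) (auto simp: is_word_Cons)
  with Cons show ?case
    unfolding wordprod_Cons by (intro permutes_compose) (simp_all add: is_word_Cons)
qed (simp add: wordprod_def permutes_id)

lemma len_le_length: "is_word n ws \<Longrightarrow> len n (wordprod ws) \<le> length ws"
  unfolding len_def by (rule Least_le) blast

text \<open>A minimal coset representative w is the shortest element sending 1 to w 1, and the
  position sum shows that the shortest such elements have length \<Sum>(w 1) - \<Sum>1.\<close>

lemma minWJ_sum_image:
  assumes "k \<le> n" "w \<in> minWJ n k" "reduced_word n w ws"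
  shows "\<Sum>(w ` one_seq k) = \<Sum>(one_seq k) + length ws"
proof -
  have w: "w permutes {1..n}" "\<And>u. u \<in> WJ n k \<Longrightarrow> len n w \<le> len n (w \<circ> u)"
    using assms(2) unfolding minWJ_def by auto
  have ws: "is_word n ws" "wordprod ws = w" "length ws = len n w"
    using assms(3) unfolding reduced_word_def by auto
  have e: "w ` one_seq k \<in> Eset n k"
    using wordprod_Eset[OF ws(1) assms(1)] ws(2) by simp
  obtain vs where vs: "is_word n vs" "wordprod vs ` one_seq k = w ` one_seq k"
    "\<Sum>(one_seq k) + length vs = \<Sum>(w ` one_seq k)"
    using Eset_reached_by_word[OF e] by blast
  let ?x = "wordprod vs"
  have "inv w \<circ> ?x \<in> WJ n k"
  proof -
    have "(inv w \<circ> ?x) ` {1..k} = inv w ` ?x ` {1..k}"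
      by (simp only: image_comp)
    also have "?x ` {1..k} = w ` {1..k}"
      using vs(2) by (simp add: one_seq_def)
    also have "inv w ` w ` {1..k} = (inv w \<circ> w) ` {1..k}"
      by (simp only: image_comp)
    also have "\<dots> = {1..k}"
      using permutes_inv_o(2)[OF w(1)] by simp
    finally show ?thesis
      unfolding WJ_def
      using permutes_compose[OF wordprod_permutes[OF vs(1)] permutes_inv[OF w(1)]] by simp
  qed
  then have "len n w \<le> len n (w \<circ> (inv w \<circ> ?x))"
    by (rule w(2))
  also have "w \<circ> (inv w \<circ> ?x) = ?x"
    using permutes_inv_o(1)[OF w(1)] by (simp add: o_assoc)
  also have "len n ?x \<le> length vs"
    using len_le_length[OF vs(1)] .
  finally have "\<Sum>(one_seq k) + length ws \<le> \<Sum>(w ` one_seq k)"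
    using ws(3) vs(3) by linarith
  moreover have "\<Sum>(w ` one_seq k) \<le> \<Sum>(one_seq k) + length ws"
    using sum_wordprod_le[OF ws(1) assms(1)] ws(2) by simp
  ultimately show ?thesis
    by simp
qed

theorem mainTheorem6:
  fixes n k :: nat and w :: "nat \<Rightarrow> nat" and ws :: "nat list"
  assumes "1 \<le> k" and "k \<le> n - 1"
    and "w \<in> minWJ n k"
    and "reduced_word n w ws"
  shows "parKL n k w = Tminus_word ws (basis (one_seq k))"
proof -
  have kn: "k \<le> n"
    using assms(1,2) by linarith
  have ws: "is_word n ws" "wordprod ws = w"
    using assms(4) unfolding reduced_word_def by auto
  have "Tminus_word ws (basis (one_seq k)) = canon n k (w ` one_seq k)"
    using Tminus_word_eq_canon[OF ws(1) kn] minWJ_sum_image[OF kn assms(3,4)] ws(2) by simp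
  moreover have "parKL n k w = canon n k (w ` one_seq k)"
    using parKL_eq_canon[OF kn] wordprod_Eset[OF ws(1) kn] ws(2) by simp
  ultimately show ?thesis
    by simp
qed

end
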